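(* Let $\zeta_2=\int_0^\infty \frac{\mathrm{d}t}{\sqrt{1+t^4}}$ and let $\mathrm{sleafh}_2:(-\zeta_2,\zeta_2)\to\mathbb{R}$ be the hyperbolic leaf function of basis $2$. For every real $l$ with $2l\in(-\zeta_2,\zeta_2)$, $$\mathrm{sleafh}_2(2l)=\frac{2\,\mathrm{sleafh}_2(l)\sqrt{1+(\mathrm{sleafh}_2(l))^4}}{1-(\mathrm{sleafh}_2(l))^4}.$$
   Context: For a natural number $n$, let $\zeta_n=\int_0^\infty \frac{\mathrm{d}t}{\sqrt{1+t^{2n}}}$. The hyperbolic leaf function $\mathrm{sleafh}_n$ is the solution $r(l)$ on $(-\zeta_n,\zeta_n)$ of $\frac{\mathrm{d}^2r}{\mathrm{d}l^2}=n\,r^{2n-1}$ with $r(0)=0$, $r'(0)=1$; equivalently it is the inverse function of $r\mapsto \int_0^r \frac{\mathrm{d}t}{\sqrt{1+t^{2n}}}$, $r\in\mathbb{R}$. *)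

theory Defs
  imports "HOL-Analysis.Analysis"
begin

definition leaf_integrand :: "nat \<Rightarrow> real \<Rightarrow> real" where
  "leaf_integrand n t = 1 / sqrt (1 + t ^ (2 * n))"

definition zeta :: "nat \<Rightarrow> real" where
  "zeta n = integral {0..} (leaf_integrand n)"

definition leaf_int :: "nat \<Rightarrow> real \<Rightarrow> real" where
  "leaf_int n r = (if 0 \<le> r then integral {0..r} (leaf_integrand n)
                   else - integral {r..0} (leaf_integrand n))"

definition sleafh :: "nat \<Rightarrow> real \<Rightarrow> real" where
  "sleafh n l = (THE r. leaf_int n r = l)"

end

theory Submission
  imports Defs
begin

text \<open>Write F for leaf_int 2, so that sleafh 2 inverts F. The map
  g x = 2 x sqrt (1 + x^4) / (1 - x^4) satisfies F'(g x) g'(x) = 2 F'(x) on (-1, 1), hence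
  F (g x) = 2 F x there. Since g maps [0, 1) onto [0, \<infinity>), this also yields zeta 2 \<le> 2 F 1.
  So if |2 l| < zeta 2, then s = sleafh 2 l satisfies |F s| < F 1, i.e. |s| < 1, and
  F (g s) = 2 l gives sleafh 2 (2 l) = g s.\<close>

lemma one_plus_even_power_pos: "(0::real) < 1 + t ^ (2 * n)"
  by (simp add: power_mult add_pos_nonneg)

lemma leaf_integrand_pos: "0 < leaf_integrand n t"
  by (simp add: leaf_integrand_def one_plus_even_power_pos)

lemma leaf_integrand_minus: "leaf_integrand n (- t) = leaf_integrand n t"
  by (simp add: leaf_integrand_def power_mult)

lemma continuous_on_leaf_integrand: "continuous_on S (leaf_integrand n)"
  unfolding leaf_integrand_def
  by (intro continuous_intros) (simp add: one_plus_even_power_pos[THEN less_imp_neq, symmetric])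

lemma leaf_integrand_integrable: "leaf_integrand n integrable_on {a..b}"
  by (rule integrable_continuous_real[OF continuous_on_leaf_integrand])

lemma leaf_int_eq_integral_diff:
  assumes "0 \<le> R" "- R \<le> r"
  shows "leaf_int n r =
    integral {-R..r} (leaf_integrand n) - integral {-R..0} (leaf_integrand n)"
proof (cases "0 \<le> r")
  case True
  have "integral {-R..0} (leaf_integrand n) + integral {0..r} (leaf_integrand n)
        = integral {-R..r} (leaf_integrand n)"
    using Henstock_Kurzweil_Integration.integral_combine[where a="-R" and c=0 and b=r and f="leaf_integrand n"]
      True assms by (simp add: leaf_integrand_integrable)
  then show ?thesis using True by (simp add: leaf_int_def)
next
  case False
  have "integral {-R..r} (leaf_integrand n) + integral {r..0} (leaf_integrand n)
        = integral {-R..0} (leaf_integrand n)"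
    using Henstock_Kurzweil_Integration.integral_combine[where a="-R" and c=r and b=0 and f="leaf_integrand n"]
      False assms by (simp add: leaf_integrand_integrable)
  then show ?thesis using False by (simp add: leaf_int_def)
qed

lemma leaf_int_has_real_derivative: "(leaf_int n has_real_derivative leaf_integrand n r) (at r)"
proof -
  define R where "R = \<bar>r\<bar> + 1"
  have R: "0 < R" "-R < r" "r < R" unfolding R_def by auto
  have "((\<lambda>x. integral {-R..x} (leaf_integrand n)) has_real_derivative leaf_integrand n r)
          (at r within {-R..R})"
    using R by (intro integral_has_real_derivative continuous_on_leaf_integrand) auto
  moreover have "at r within {-R..R} = at r"
    using R by (intro at_within_interior) auto
  ultimately have "((\<lambda>x. integral {-R..x} (leaf_integrand n) - integral {-R..0} (leaf_integrand n))
      has_real_derivative leaf_integrand n r) (at r)"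
    by (auto intro!: derivative_eq_intros)
  then show ?thesis
    by (rule has_field_derivative_transform_within_open[where S="{-R<..<R}"])
       (use R in \<open>auto simp: leaf_int_eq_integral_diff[where R=R]\<close>)
qed

lemma continuous_on_leaf_int: "continuous_on S (leaf_int n)"
  by (intro continuous_at_imp_continuous_on ballI DERIV_isCont[OF leaf_int_has_real_derivative])

lemma leaf_int_0 [simp]: "leaf_int n 0 = 0"
  by (simp add: leaf_int_def)

lemma strict_mono_leaf_int: "strict_mono (leaf_int n)"
proof (rule strict_monoI)
  fix x y :: real
  assume "x < y"
  then show "leaf_int n x < leaf_int n y"
    by (rule DERIV_pos_imp_increasing)
       (metis leaf_int_has_real_derivative leaf_integrand_pos)
qed

lemma leaf_int_le_iff [simp]: "leaf_int n x \<le> leaf_int n y \<longleftrightarrow> x \<le> y"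
  by (rule strict_mono_less_eq[OF strict_mono_leaf_int])

lemma leaf_int_less_iff [simp]: "leaf_int n x < leaf_int n y \<longleftrightarrow> x < y"
  by (rule strict_mono_less[OF strict_mono_leaf_int])

lemma leaf_int_eq_iff [simp]: "leaf_int n x = leaf_int n y \<longleftrightarrow> x = y"
  by (rule strict_mono_eq[OF strict_mono_leaf_int])

lemma leaf_int_minus: "leaf_int n (- x) = - leaf_int n x"
proof -
  have "((\<lambda>y. leaf_int n (- y) + leaf_int n y) has_real_derivative 0) (at y)" for y
  proof -
    have "((\<lambda>y. leaf_int n (- y)) has_real_derivative leaf_integrand n (- y) * (- 1)) (at y)"
      by (rule DERIV_chain2[OF leaf_int_has_real_derivative DERIV_minus[OF DERIV_ident]])
    from DERIV_add[OF this leaf_int_has_real_derivative[of n y]]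
    show ?thesis
      by (simp only: leaf_integrand_minus mult_minus1_right add.left_inverse)
  qed
  from DERIV_isconst_all[OF allI[OF this], of x 0] show ?thesis by simp
qed

lemma sleafh_leaf_int [simp]: "sleafh n (leaf_int n r) = r"
  unfolding sleafh_def by (rule the_equality) auto

lemma leaf_int_nonneg_iff [simp]: "0 \<le> leaf_int n x \<longleftrightarrow> 0 \<le> x"
  using leaf_int_le_iff[of n 0 x] by (simp only: leaf_int_0)

lemma leaf_int_neg_iff [simp]: "leaf_int n x < 0 \<longleftrightarrow> x < 0"
  using leaf_int_less_iff[of n x 0] by (simp only: leaf_int_0)

lemma leaf_int_abs: "leaf_int n \<bar>x\<bar> = \<bar>leaf_int n x\<bar>"
  by (simp add: abs_if leaf_int_minus)

lemma zeta_le: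
  assumes bound: "\<And>r. 0 \<le> r \<Longrightarrow> leaf_int n r \<le> c"
  shows "zeta n \<le> c"
proof -
  define h where "h = (\<lambda>(k::nat) x. if x \<in> {0..real k} then leaf_integrand n x else 0)"
  have int: "h k integrable_on {0..}" for k
    unfolding h_def integrable_restrict_Int by (simp add: leaf_integrand_integrable Int_absorb2)
  have integral_h: "integral {0..} (h k) = leaf_int n (real k)" for k
    unfolding h_def integral_restrict_Int by (simp add: Int_absorb2 leaf_int_def)
  have mono: "h k x \<le> h (Suc k) x" for k x
    using leaf_integrand_pos[of n x] by (auto simp: h_def)
  have conv: "(\<lambda>k. h k x) \<longlonglongrightarrow> leaf_integrand n x" if "x \<in> {0..}" for x
  proof (rule tendsto_eventually)
    have "h k x = leaf_integrand n x" if "nat \<lceil>x\<rceil> \<le> k" for k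
      using that \<open>x \<in> {0..}\<close> by (auto simp: h_def)
    then show "\<forall>\<^sub>F k in sequentially. h k x = leaf_integrand n x"
      unfolding eventually_sequentially by blast
  qed
  have "\<bar>leaf_int n (real k)\<bar> \<le> \<bar>c\<bar>" for k
    using bound[of "real k"] leaf_int_abs[of n "real k"] by simp
  then have "bounded (range (\<lambda>k. integral {0..} (h k)))"
    unfolding bounded_real integral_h by blast
  with monotone_convergence_increasing[OF int mono conv]
  have "(\<lambda>k. leaf_int n (real k)) \<longlonglongrightarrow> zeta n"
    by (simp add: integral_h zeta_def)
  then show ?thesis
    by (rule Lim_bounded) (use bound in auto)
qed

lemma leaf_int_attains:
  assumes "\<bar>y\<bar> < zeta n"
  shows "\<exists>r. leaf_int n r = y"
proof -
  have "\<exists>r. leaf_int n r = \<bar>y\<bar>"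
  proof (rule ccontr)
    assume missed: "\<nexists>r. leaf_int n r = \<bar>y\<bar>"
    have "leaf_int n r \<le> \<bar>y\<bar>" if "0 \<le> r" for r
    proof (rule ccontr)
      assume "\<not> leaf_int n r \<le> \<bar>y\<bar>"
      then have "leaf_int n 0 \<le> \<bar>y\<bar>" "\<bar>y\<bar> \<le> leaf_int n r" by auto
      from IVT'[OF this that continuous_on_leaf_int] missed show False by blast
    qed
    then have "zeta n \<le> \<bar>y\<bar>" by (rule zeta_le)
    with assms show False by simp
  qed
  then obtain r where "leaf_int n r = \<bar>y\<bar>" ..
  then have "leaf_int n (if 0 \<le> y then r else - r) = y"
    by (simp add: leaf_int_minus)
  then show ?thesis ..
qed

definition leaf_dup :: "real \<Rightarrow> real" where
  "leaf_dup x = 2 * x * sqrt (1 + x ^ 4) / (1 - x ^ 4)"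

lemma power4_less_one: "\<bar>x\<bar> < 1 \<Longrightarrow> (x::real) ^ 4 < 1"
  using power_strict_mono[of "\<bar>x\<bar>" 1 4] by (simp add: power_even_abs_numeral)

lemma has_real_derivative_leaf_dup:
  assumes "\<bar>x\<bar> < 1"
  shows "(leaf_dup has_real_derivative
           2 * (1 + 6 * x ^ 4 + x ^ 8) / ((1 - x ^ 4)\<^sup>2 * sqrt (1 + x ^ 4))) (at x)"
proof -
  define v where "v = x ^ 4"
  define w where "w = sqrt (1 + v)"
  have v: "v \<noteq> 1" using power4_less_one[OF assms] by (simp add: v_def)
  have w: "0 < w" "w * w = 1 + v"
    by (simp_all add: w_def v_def add_pos_nonneg add_nonneg_nonneg)
  have "(leaf_dup has_real_derivative
          ((2 * w + 4 * v / w) * (1 - v) + 8 * v * w) / (1 - v)\<^sup>2) (at x)"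
    unfolding leaf_dup_def using v w
    by (auto intro!: derivative_eq_intros simp: v_def w_def eval_nat_numeral field_simps)
  moreover have "((2 * w + 4 * v / w) * (1 - v) + 8 * v * w) / (1 - v)\<^sup>2
      = 2 * (1 + 6 * v + v\<^sup>2) / ((1 - v)\<^sup>2 * w)"
    using v w by (simp add: field_simps power2_eq_square)
  ultimately have
    "(leaf_dup has_real_derivative 2 * (1 + 6 * v + v\<^sup>2) / ((1 - v)\<^sup>2 * w)) (at x)"
    by simp
  moreover have "x ^ 8 = v\<^sup>2"
    by (simp add: v_def flip: power_mult)
  ultimately show ?thesis
    by (simp add: w_def flip: v_def)
qed

lemma leaf_integrand_leaf_dup:
  assumes "\<bar>x\<bar> < 1"
  shows "leaf_integrand 2 (leaf_dup x) = (1 - x ^ 4)\<^sup>2 / (1 + 6 * x ^ 4 + x ^ 8)"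
proof -
  define v where "v = x ^ 4"
  have v: "0 \<le> v" "v \<noteq> 1" using power4_less_one[OF assms] by (simp_all add: v_def)
  have "sqrt (1 + v) ^ 4 = (sqrt (1 + v) ^ 2)\<^sup>2"
    by (simp flip: power_mult)
  then have w4: "sqrt (1 + v) ^ 4 = (1 + v)\<^sup>2"
    using v by simp
  have "leaf_dup x ^ 4 = 16 * v * sqrt (1 + v) ^ 4 / (1 - v) ^ 4"
    by (simp add: leaf_dup_def v_def power_divide power_mult_distrib)
  also have "\<dots> = 16 * v * (1 + v)\<^sup>2 / (1 - v) ^ 4"
    by (simp only: w4)
  finally have "1 + leaf_dup x ^ 4 = ((1 + 6 * v + v\<^sup>2) / (1 - v)\<^sup>2)\<^sup>2"
    using v by (simp add: field_simps) (simp add: algebra_simps power2_eq_square power4_eq_xxxx)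
  then have "sqrt (1 + leaf_dup x ^ 4) = (1 + 6 * v + v\<^sup>2) / (1 - v)\<^sup>2"
    using v by simp
  moreover have "x ^ 8 = v\<^sup>2"
    by (simp add: v_def flip: power_mult)
  ultimately show ?thesis
    by (simp add: leaf_integrand_def flip: v_def)
qed

lemma leaf_dup_unbounded:
  assumes "0 \<le> r"
  shows "\<exists>x. 0 \<le> x \<and> x < 1 \<and> r \<le> leaf_dup x"
proof -
  define q where "q = 1 - 1 / (r + 2)"
  have q: "1 / 2 \<le> q" "q < 1"
    using assms by (auto simp: q_def field_simps)
  define x where "x = root 4 q"
  have x: "x ^ 4 = q" "0 \<le> x" "x < 1"
    using q by (auto simp: x_def real_root_pow_pos2)
  have "q \<le> x"
    using power_decreasing[of 1 4 x] x by simp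
  then have "1 \<le> 2 * x" using q by simp
  moreover have "1 \<le> sqrt (1 + x ^ 4)"
    using q x by simp
  ultimately have "1 \<le> 2 * x * sqrt (1 + x ^ 4)"
    using mult_mono[of 1 "2 * x" 1 "sqrt (1 + x ^ 4)"] by simp
  moreover have "leaf_dup x = 2 * x * sqrt (1 + x ^ 4) * (r + 2)"
    by (simp add: leaf_dup_def x(1) q_def)
  ultimately have "r + 2 \<le> leaf_dup x"
    using mult_left_mono[of 1 "2 * x * sqrt (1 + x ^ 4)" "r + 2"] assms by simp
  with x show ?thesis by (intro exI[of _ x]) simp
qed

lemma leaf_int_leaf_dup:
  assumes "\<bar>x\<bar> < 1"
  shows "leaf_int 2 (leaf_dup x) = 2 * leaf_int 2 x"
proof -
  have "((\<lambda>y. leaf_int 2 (leaf_dup y) - 2 * leaf_int 2 y) has_real_derivative 0) (at y)"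
    if "y \<in> {-1<..<1}" for y
  proof -
    have y: "\<bar>y\<bar> < 1" using that by auto
    have "0 \<le> y ^ 4" "0 \<le> y ^ 8" by (simp_all add: zero_le_even_power)
    then have p: "1 + 6 * y ^ 4 + y ^ 8 \<noteq> 0" by linarith
    have d: "(1 - y ^ 4)\<^sup>2 \<noteq> 0" using power4_less_one[OF y] by simp
    have cancel: "d / p * (2 * p / (d * w)) = 2 * (1 / w)" if "p \<noteq> 0" "d \<noteq> 0" for p d w :: real
      using that by simp
    have "leaf_integrand 2 (leaf_dup y) *
        (2 * (1 + 6 * y ^ 4 + y ^ 8) / ((1 - y ^ 4)\<^sup>2 * sqrt (1 + y ^ 4))) = 2 * leaf_integrand 2 y"
      unfolding leaf_integrand_leaf_dup[OF y] cancel[OF p d] by (simp add: leaf_integrand_def)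
    moreover have "((\<lambda>y. leaf_int 2 (leaf_dup y) - 2 * leaf_int 2 y) has_real_derivative
        leaf_integrand 2 (leaf_dup y) *
        (2 * (1 + 6 * y ^ 4 + y ^ 8) / ((1 - y ^ 4)\<^sup>2 * sqrt (1 + y ^ 4)))
        - 2 * leaf_integrand 2 y) (at y)"
      by (intro DERIV_diff DERIV_cmult DERIV_chain2[OF leaf_int_has_real_derivative]
          has_real_derivative_leaf_dup leaf_int_has_real_derivative y)
    ultimately show ?thesis by simp
  qed
  from DERIV_isconst3[of "-1" 1 x 0, OF _ _ _ this] assms
  show ?thesis by (simp add: abs_less_iff leaf_dup_def)
qed

lemma zeta_le_two_leaf_int_one: "zeta 2 \<le> 2 * leaf_int 2 1"
proof (rule zeta_le)
  fix r :: real
  assume "0 \<le> r"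
  then obtain x where x: "0 \<le> x" "x < 1" "r \<le> leaf_dup x"
    using leaf_dup_unbounded by blast
  then have "leaf_int 2 r \<le> leaf_int 2 (leaf_dup x)" by simp
  also have "\<dots> = 2 * leaf_int 2 x" using x by (intro leaf_int_leaf_dup) simp
  also have "\<dots> \<le> 2 * leaf_int 2 1" using x by simp
  finally show "leaf_int 2 r \<le> 2 * leaf_int 2 1" .
qed

theorem mainTheorem8:
  fixes l :: real
  assumes "- zeta 2 < 2 * l" and "2 * l < zeta 2"
  shows "sleafh 2 (2 * l) =
    2 * sleafh 2 l * sqrt (1 + (sleafh 2 l) ^ 4) / (1 - (sleafh 2 l) ^ 4)"
proof -
  have "\<bar>l\<bar> < zeta 2" using assms by auto
  then obtain s where s: "leaf_int 2 s = l" using leaf_int_attains by blast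
  have "leaf_int 2 \<bar>s\<bar> < leaf_int 2 1"
    using assms zeta_le_two_leaf_int_one by (simp add: leaf_int_abs s)
  then have "leaf_int 2 (leaf_dup s) = 2 * l"
    using leaf_int_leaf_dup s by simp
  then have "sleafh 2 (2 * l) = leaf_dup s"
    by (metis sleafh_leaf_int)
  moreover have "sleafh 2 l = s"
    using s by (metis sleafh_leaf_int)
  ultimately show ?thesis
    by (simp add: leaf_dup_def)
qed

end
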